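(* For all policies $\pi,\pi'\in\Pi$: if $\mathbf{Z}^{\pi}\succ_d\mathbf{Z}^{\pi'}$ then $\mathbf{V}^{\pi}\succ_p\mathbf{V}^{\pi'}$.
   Context: $\Pi$ is a family of policies of a multi-objective sequential decision problem (e.g. a multi-objective Markov decision process with $d$ objectives, vector reward $\mathbf{r}_t\in\mathbb{R}^d$ and discount $\gamma$). For $\pi\in\Pi$, $\mathbf{Z}^{\pi}=(Z^\pi_1,\dots,Z^\pi_d)^T$ is the random return vector $\sum_{t\ge0}\gamma^t\mathbf{r}_t$ obtained by following $\pi$, and $\mathbf{V}^\pi=\mathbb{E}[\mathbf{Z}^\pi]$ is its (finite) expected value. For $\mathbf{x},\mathbf{y}\in\mathbb{R}^d$: $\mathbf{y}\preceq_p\mathbf{x}$ iff $y_i\le x_i$ for all $i$; $\mathbf{x}\succ_p\mathbf{y}$ (Pareto dominance) iff $x_i\ge y_i$ for all $i$ and $x_i>y_i$ for some $i$. CDF: $F_{\mathbf{X}}(\mathbf{x})=P(\mathbf{X}\preceq_p\mathbf{x})$. $\mathbf{X}\succeq_{\mathrm{FSD}}\mathbf{Y}$ iff $F_{\mathbf{X}}\le F_{\mathbf{Y}}$ pointwise; $\mathbf{X}\succ_{\mathrm{FSD}}\mathbf{Y}$ iff additionally $F_{\mathbf{X}}(\mathbf{v})<F_{\mathbf{Y}}(\mathbf{v})$ for some $\mathbf{v}$ (same for real random variables). Distributional dominance $\mathbf{X}\succ_d\mathbf{Y}$: $\mathbf{X}\succeq_{\mathrm{FSD}}\mathbf{Y}$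 and $X_i\succ_{\mathrm{FSD}}Y_i$ for some $i\in\{1,\dots,d\}$. *)

theory Defs
  imports "HOL-Probability.Probability"
begin

text \<open>Vectors in R^d are modelled as real^'d (d = CARD('d)). The random return
vector Z^pi of a policy is represented by its law, a probability measure on the
Borel sets of real^'d.\<close>

definition pareto_le :: "real^'d \<Rightarrow> real^'d \<Rightarrow> bool" where
  "pareto_le y x \<longleftrightarrow> (\<forall>i. y$i \<le> x$i)"

definition pareto_dom :: "real^'d \<Rightarrow> real^'d \<Rightarrow> bool" where
  "pareto_dom x y \<longleftrightarrow> (\<forall>i. x$i \<ge> y$i) \<and> (\<exists>i. x$i > y$i)"

definition cdf_vec :: "(real^'d) measure \<Rightarrow> real^'d \<Rightarrow> real" where
  "cdf_vec M x = measure M {z. pareto_le z x}"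

definition cdf_comp :: "(real^'d) measure \<Rightarrow> 'd \<Rightarrow> real \<Rightarrow> real" where
  "cdf_comp M i t = measure M {z. z$i \<le> t}"

definition fsd_ge :: "(real^'d) measure \<Rightarrow> (real^'d) measure \<Rightarrow> bool" where
  "fsd_ge M N \<longleftrightarrow> (\<forall>x. cdf_vec M x \<le> cdf_vec N x)"

definition fsd_strict_comp :: "(real^'d) measure \<Rightarrow> (real^'d) measure \<Rightarrow> 'd \<Rightarrow> bool" where
  "fsd_strict_comp M N i \<longleftrightarrow>
     (\<forall>t. cdf_comp M i t \<le> cdf_comp N i t) \<and> (\<exists>t. cdf_comp M i t < cdf_comp N i t)"

definition dist_dom :: "(real^'d) measure \<Rightarrow> (real^'d) measure \<Rightarrow> bool" where
  "dist_dom M N \<longleftrightarrow> fsd_ge M N \<and> (\<exists>i. fsd_strict_comp M N i)"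

definition expval :: "(real^'d) measure \<Rightarrow> real^'d" where
  "expval M = integral\<^sup>L M (\<lambda>z. z)"

end

(*
  For a real law with CDF F and finite mean, Tonelli's theorem writes the mean as the integral
  of 1 - F over [0, \<infinity>) minus the integral of F over (-\<infinity>, 0); hence for two such laws
  E X - E Y is the integral of F\<^sub>Y - F\<^sub>X over the whole line. So F\<^sub>X \<le> F\<^sub>Y gives E X \<ge> E Y,
  and since F\<^sub>X is right-continuous, a strict gap F\<^sub>X t\<^sub>0 < F\<^sub>Y t\<^sub>0 persists on an interval
  (t\<^sub>0, b), which makes the inequality strict. Joint first-order dominance implies dominance of
  every marginal (let the other coordinates tend to infinity), and each component of the mean
  vector is the mean of its marginal.
*)
theory Submission
  imports Defs
begin

lemma (in real_distribution) nn_integral_pos_part_eq_tail: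
  "(\<integral>\<^sup>+x. ennreal x \<partial>M) = (\<integral>\<^sup>+t. ennreal (indicator {0..} t * (1 - cdf M t)) \<partial>lborel)"
proof -
  interpret pair_sigma_finite M lborel ..
  have "(\<integral>\<^sup>+x. ennreal x \<partial>M) = (\<integral>\<^sup>+x. (\<integral>\<^sup>+t. indicator {0..<x} t \<partial>lborel) \<partial>M)"
  proof (intro nn_integral_cong)
    fix x :: real
    show "ennreal x = (\<integral>\<^sup>+t. indicator {0..<x} t \<partial>lborel)"
      by (cases "0 \<le> x") (auto simp: ennreal_neg)
  qed
  also have "\<dots> = (\<integral>\<^sup>+t. (\<integral>\<^sup>+x. indicator {0..<x} t \<partial>M) \<partial>lborel)"
    by (rule Fubini'[symmetric]) (auto simp: case_prod_unfold indicator_def)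
  also have "\<dots> = (\<integral>\<^sup>+t. (\<integral>\<^sup>+x. indicator {0..} t * indicator {t<..} x \<partial>M) \<partial>lborel)"
    by (intro nn_integral_cong) (auto simp: indicator_def)
  also have "\<dots> = (\<integral>\<^sup>+t. indicator {0..} t * emeasure M {t<..} \<partial>lborel)"
    by (simp add: nn_integral_cmult_indicator)
  also have "\<dots> = (\<integral>\<^sup>+t. ennreal (indicator {0..} t * (1 - cdf M t)) \<partial>lborel)"
  proof (intro nn_integral_cong)
    fix t :: real
    have "UNIV - {..t} = {t<..}"
      by auto
    then have "measure M {t<..} = 1 - cdf M t"
      using prob_compl[of "{..t}"] by (simp add: cdf_def)
    then show "indicator {0..} t * emeasure M {t<..} = ennreal (indicator {0..} t * (1 - cdf M t))"
      by (simp add: emeasure_eq_measure indicator_def)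
  qed
  finally show ?thesis .
qed

lemma (in real_distribution) nn_integral_neg_part_eq_tail:
  "(\<integral>\<^sup>+x. ennreal (- x) \<partial>M) = (\<integral>\<^sup>+t. ennreal (indicator {..<0} t * cdf M t) \<partial>lborel)"
proof -
  interpret pair_sigma_finite M lborel ..
  have "(\<integral>\<^sup>+x. ennreal (- x) \<partial>M) = (\<integral>\<^sup>+x. (\<integral>\<^sup>+t. indicator {x..<0} t \<partial>lborel) \<partial>M)"
  proof (intro nn_integral_cong)
    fix x :: real
    show "ennreal (- x) = (\<integral>\<^sup>+t. indicator {x..<0} t \<partial>lborel)"
      by (cases "x \<le> 0") (auto simp: ennreal_neg)
  qed
  also have "\<dots> = (\<integral>\<^sup>+t. (\<integral>\<^sup>+x. indicator {x..<0} t \<partial>M) \<partial>lborel)"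
    by (rule Fubini'[symmetric]) (auto simp: case_prod_unfold indicator_def)
  also have "\<dots> = (\<integral>\<^sup>+t. (\<integral>\<^sup>+x. indicator {..<0} t * indicator {..t} x \<partial>M) \<partial>lborel)"
    by (intro nn_integral_cong) (auto simp: indicator_def)
  also have "\<dots> = (\<integral>\<^sup>+t. indicator {..<0} t * emeasure M {..t} \<partial>lborel)"
    by (simp add: nn_integral_cmult_indicator)
  also have "\<dots> = (\<integral>\<^sup>+t. ennreal (indicator {..<0} t * cdf M t) \<partial>lborel)"
    by (intro nn_integral_cong) (simp add: emeasure_eq_measure cdf_def indicator_def)
  finally show ?thesis .
qed

lemma integrable_nonneg_if_nn_integral_eq:
  fixes f :: "'a \<Rightarrow> real"
  assumes "f \<in> borel_measurable N" "\<And>x. 0 \<le> f x" "(\<integral>\<^sup>+x. ennreal (f x) \<partial>N) = I" "I < \<infinity>"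
  shows "integrable N f" "integral\<^sup>L N f = enn2real I"
  using assms by (auto intro: integrableI_nonneg simp: integral_eq_nn_integral)

lemma (in real_distribution) expectation_eq_tail_integrals:
  assumes "integrable M (\<lambda>x. x)"
  shows "integrable lborel (\<lambda>t. indicator {0..} t * (1 - cdf M t))"
    and "integrable lborel (\<lambda>t. indicator {..<0} t * cdf M t)"
    and "(\<integral>x. x \<partial>M) = (\<integral>t. indicator {0..} t * (1 - cdf M t) \<partial>lborel) - (\<integral>t. indicator {..<0} t * cdf M t \<partial>lborel)"
proof -
  have "mono (cdf M)"
    by (auto intro: monoI cdf_nondecreasing)
  then have "cdf M \<in> borel_measurable borel"
    by (rule borel_measurable_mono)
  then have measurable: "(\<lambda>t. indicator {0..} t * (1 - cdf M t)) \<in> borel_measurable lborel"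
    "(\<lambda>t. indicator {..<0} t * cdf M t) \<in> borel_measurable lborel"
    by simp_all
  have nonneg: "0 \<le> indicator {0..} t * (1 - cdf M t)" "0 \<le> indicator {..<0} t * cdf M t" for t
    using cdf_bounded_prob[of t] cdf_nonneg[of t] by (simp_all add: indicator_def)
  have finite: "(\<integral>\<^sup>+x. ennreal x \<partial>M) < \<infinity>" "(\<integral>\<^sup>+x. ennreal (- x) \<partial>M) < \<infinity>"
    using integrableD(2,3)[OF assms] by (auto simp: less_top)
  note pos = integrable_nonneg_if_nn_integral_eq[OF measurable(1) nonneg(1) nn_integral_pos_part_eq_tail[symmetric] finite(1)]
  note neg = integrable_nonneg_if_nn_integral_eq[OF measurable(2) nonneg(2) nn_integral_neg_part_eq_tail[symmetric] finite(2)]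
  show "integrable lborel (\<lambda>t. indicator {0..} t * (1 - cdf M t))"
    "integrable lborel (\<lambda>t. indicator {..<0} t * cdf M t)"
    using pos(1) neg(1) .
  show "(\<integral>x. x \<partial>M) = (\<integral>t. indicator {0..} t * (1 - cdf M t) \<partial>lborel) - (\<integral>t. indicator {..<0} t * cdf M t \<partial>lborel)"
    unfolding pos(2) neg(2) real_lebesgue_integral_def[OF assms] ..
qed

lemma expectation_diff_eq_integral_cdf_diff:
  assumes M: "real_distribution M" "integrable M (\<lambda>x. x)"
    and N: "real_distribution N" "integrable N (\<lambda>x. x)"
  shows "integrable lborel (\<lambda>t. cdf N t - cdf M t)"
    and "(\<integral>x. x \<partial>M) - (\<integral>x. x \<partial>N) = (\<integral>t. cdf N t - cdf M t \<partial>lborel)"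
proof -
  note EM = real_distribution.expectation_eq_tail_integrals[OF M]
  note EN = real_distribution.expectation_eq_tail_integrals[OF N]
  have split: "cdf N t - cdf M t =
      (indicator {0..} t * (1 - cdf M t) - indicator {0..} t * (1 - cdf N t))
    + (indicator {..<0} t * cdf N t - indicator {..<0} t * cdf M t)" for t :: real
    by (auto simp: indicator_def)
  show "integrable lborel (\<lambda>t. cdf N t - cdf M t)"
    \<comment> \<open>qualified names: Henstock-Kurzweil integration has lemmas with the same names\<close>
    unfolding split
    by (intro Bochner_Integration.integrable_add Bochner_Integration.integrable_diff EM(1,2) EN(1,2))
  show "(\<integral>x. x \<partial>M) - (\<integral>x. x \<partial>N) = (\<integral>t. cdf N t - cdf M t \<partial>lborel)"
  proof -
    have "(\<integral>t. cdf N t - cdf M t \<partial>lborel) =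
        (\<integral>t. indicator {0..} t * (1 - cdf M t) \<partial>lborel) - (\<integral>t. indicator {0..} t * (1 - cdf N t) \<partial>lborel)
      + ((\<integral>t. indicator {..<0} t * cdf N t \<partial>lborel) - (\<integral>t. indicator {..<0} t * cdf M t \<partial>lborel))"
      unfolding split using EM(1,2) EN(1,2)
      by (simp only: Bochner_Integration.integral_add Bochner_Integration.integral_diff
          Bochner_Integration.integrable_diff)
    then show ?thesis
      unfolding EM(3) EN(3) by linarith
  qed
qed

lemma integral_lborel_pos_if_pos_on_interval:
  fixes f :: "real \<Rightarrow> real"
  assumes "integrable lborel f" "\<And>t. 0 \<le> f t" "a < b" "\<And>t. a < t \<Longrightarrow> t < b \<Longrightarrow> 0 < f t"
  shows "0 < (\<integral>t. f t \<partial>lborel)"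
proof -
  have "\<not> (AE t in lborel. f t = 0)"
  proof
    assume "AE t in lborel. f t = 0"
    then have "AE t in lborel. t \<notin> {a<..<b}"
      by eventually_elim (use assms(4) in fastforce)
    then have "emeasure lborel {a<..<b} = 0"
      by (subst (asm) AE_iff_measurable[of "{a<..<b}"]) auto
    with \<open>a < b\<close> show False
      by simp
  qed
  then have "(\<integral>t. f t \<partial>lborel) \<noteq> 0"
    using integral_nonneg_eq_0_iff_AE[of lborel f] assms(1,2) by simp
  moreover have "0 \<le> (\<integral>t. f t \<partial>lborel)"
    using assms(2) by simp
  ultimately show ?thesis
    by simp
qed

lemma (in finite_borel_measure) cdf_less_on_right_interval:
  assumes "finite_borel_measure N" "cdf M t0 < cdf N t0"
  obtains b where "t0 < b" "\<And>t. t0 < t \<Longrightarrow> t < b \<Longrightarrow> cdf M t < cdf N t"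
proof -
  have "(cdf M \<longlongrightarrow> cdf M t0) (at_right t0)"
    using cdf_is_right_cont by (simp add: continuous_within)
  then have "eventually (\<lambda>t. cdf M t < cdf N t0) (at_right t0)"
    using assms(2) by (rule order_tendstoD)
  then obtain b where "t0 < b" "\<And>t. t0 < t \<Longrightarrow> t < b \<Longrightarrow> cdf M t < cdf N t0"
    by (auto simp: eventually_at_right_field)
  moreover have "cdf N t0 \<le> cdf N t" if "t0 < t" for t
    using finite_borel_measure.cdf_nondecreasing[OF assms(1)] that by simp
  ultimately show thesis
    using that by (meson order_less_le_trans)
qed

lemma expectation_le_if_cdf_le:
  assumes "real_distribution M" "integrable M (\<lambda>x. x)"
    and "real_distribution N" "integrable N (\<lambda>x. x)"
    and "\<And>t. cdf M t \<le> cdf N t"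
  shows "(\<integral>x. x \<partial>N) \<le> (\<integral>x. x \<partial>M)"
proof -
  have "0 \<le> (\<integral>t. cdf N t - cdf M t \<partial>lborel)"
    using assms(5) by (intro Bochner_Integration.integral_nonneg) simp
  then show ?thesis
    using expectation_diff_eq_integral_cdf_diff(2)[OF assms(1-4)] by simp
qed

lemma expectation_less_if_cdf_le_less:
  assumes M: "real_distribution M" "integrable M (\<lambda>x. x)"
    and N: "real_distribution N" "integrable N (\<lambda>x. x)"
    and "\<And>t. cdf M t \<le> cdf N t" "cdf M t0 < cdf N t0"
  shows "(\<integral>x. x \<partial>N) < (\<integral>x. x \<partial>M)"
proof -
  interpret M: real_distribution M by fact
  interpret N: real_distribution N by fact
  obtain b where "t0 < b" "\<And>t. t0 < t \<Longrightarrow> t < b \<Longrightarrow> cdf M t < cdf N t"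
    using M.cdf_less_on_right_interval[OF N.finite_borel_measure_M assms(6)] by blast
  then have "0 < (\<integral>t. cdf N t - cdf M t \<partial>lborel)"
    using expectation_diff_eq_integral_cdf_diff(1)[OF M N] assms(5)
    by (intro integral_lborel_pos_if_pos_on_interval) auto
  then show ?thesis
    using expectation_diff_eq_integral_cdf_diff(2)[OF M N] by simp
qed

definition marginal :: "(real^'d) measure \<Rightarrow> 'd \<Rightarrow> real measure" where
  "marginal M i = distr M borel (\<lambda>z. z $ i)"

lemma measurable_nth_borel:
  fixes M :: "(real^'d) measure"
  assumes "sets M = sets borel"
  shows "(\<lambda>z. z $ i) \<in> borel_measurable M"
  using assms by (simp cong: measurable_cong_sets)

lemma real_distribution_marginal:
  assumes "prob_space M" "sets M = sets borel"
  shows "real_distribution (marginal M i)"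
  unfolding marginal_def
  using prob_space.real_distribution_distr[OF assms(1) measurable_nth_borel[OF assms(2)]] .

lemma cdf_marginal:
  assumes "sets M = sets borel"
  shows "cdf (marginal M i) t = cdf_comp M i t"
proof -
  have "space M = UNIV"
    using sets_eq_imp_space_eq[OF assms] by simp
  then show ?thesis
    unfolding marginal_def cdf_def cdf_comp_def
    by (simp add: measure_distr[OF measurable_nth_borel[OF assms]] vimage_def)
qed

lemma integrable_marginal:
  assumes "sets M = sets borel" "integrable M (\<lambda>z. z)"
  shows "integrable (marginal M i) (\<lambda>x. x)"
  unfolding marginal_def
  using integrable_bounded_linear[OF bounded_linear_vec_nth assms(2), of i]
  by (simp add: integrable_distr_eq[OF measurable_nth_borel[OF assms(1)]])

lemma expval_nth_eq_marginal_mean: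
  assumes "sets M = sets borel" "integrable M (\<lambda>z. z)"
  shows "expval M $ i = (\<integral>x. x \<partial>marginal M i)"
  unfolding marginal_def expval_def
  by (simp add: integral_distr[OF measurable_nth_borel[OF assms(1)]]
      integral_bounded_linear[OF bounded_linear_vec_nth assms(2)])

lemma pareto_le_trans: "pareto_le x y \<Longrightarrow> pareto_le y z \<Longrightarrow> pareto_le x z"
  unfolding pareto_le_def by (meson order_trans)

lemma cdf_vec_tendsto_cdf_comp:
  fixes M :: "(real^'d) measure"
  assumes "finite_measure M" "sets M = sets borel"
  shows "(\<lambda>n. cdf_vec M (\<chi> j. if j = i then t else real n)) \<longlonglongrightarrow> cdf_comp M i t"
proof -
  define A where "A n = {z::real^'d. pareto_le z (\<chi> j. if j = i then t else real n)}" for n :: nat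
  have "closed (A n)" for n
    unfolding A_def pareto_le_def by (rule closed_interval_left_cart)
  then have "range A \<subseteq> sets M"
    using assms(2) by auto
  moreover have "pareto_le (\<chi> j. if j = i then t else real n) (\<chi> j. if j = i then t else real (Suc n))" for n
    by (simp add: pareto_le_def)
  then have "incseq A"
    unfolding A_def by (intro incseq_SucI) (blast intro: pareto_le_trans)
  ultimately have "(\<lambda>n. measure M (A n)) \<longlonglongrightarrow> measure M (\<Union>n. A n)"
    by (rule finite_measure.finite_Lim_measure_incseq[OF assms(1)])
  moreover have "(\<Union>n. A n) = {z. z $ i \<le> t}"
  proof
    show "(\<Union>n. A n) \<subseteq> {z. z $ i \<le> t}"
      unfolding A_def pareto_le_def by (auto dest: spec[of _ i])
    show "{z. z $ i \<le> t} \<subseteq> (\<Union>n. A n)"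
    proof
      fix z :: "real^'d"
      assume "z \<in> {z. z $ i \<le> t}"
      moreover obtain n :: nat where "norm z \<le> real n"
        using real_arch_simple by blast
      ultimately have "z \<in> A n"
        using component_le_norm_cart[of z] by (auto simp: A_def pareto_le_def abs_le_iff intro: order_trans)
      then show "z \<in> (\<Union>n. A n)"
        by blast
    qed
  qed
  ultimately show ?thesis
    by (simp add: cdf_vec_def cdf_comp_def A_def)
qed

lemma cdf_comp_le_if_fsd_ge:
  assumes "finite_measure M" "sets M = sets borel" "finite_measure N" "sets N = sets borel"
    and "fsd_ge M N"
  shows "cdf_comp M i t \<le> cdf_comp N i t"
  using LIMSEQ_le[OF cdf_vec_tendsto_cdf_comp[OF assms(1,2)] cdf_vec_tendsto_cdf_comp[OF assms(3,4)]] assms(5)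
  by (auto simp: fsd_ge_def)

lemma pareto_dom_expval_if_dist_dom:
  fixes M N :: "(real^'d) measure"
  assumes M: "prob_space M" "sets M = sets borel" "integrable M (\<lambda>z. z)"
    and N: "prob_space N" "sets N = sets borel" "integrable N (\<lambda>z. z)"
    and "dist_dom M N"
  shows "pareto_dom (expval M) (expval N)"
proof -
  have marginals: "real_distribution (marginal M i)" "integrable (marginal M i) (\<lambda>x. x)"
    "real_distribution (marginal N i)" "integrable (marginal N i) (\<lambda>x. x)" for i
    using M N by (simp_all add: real_distribution_marginal integrable_marginal)
  have cdf_le: "cdf (marginal M i) t \<le> cdf (marginal N i) t" for i t
    using cdf_comp_le_if_fsd_ge[OF prob_space.finite_measure[OF M(1)] M(2) prob_space.finite_measure[OF N(1)] N(2)]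
      \<open>dist_dom M N\<close>
    by (simp add: cdf_marginal M(2) N(2) dist_dom_def)
  have "expval N $ i \<le> expval M $ i" for i
    using expectation_le_if_cdf_le[OF marginals cdf_le]
    by (simp add: expval_nth_eq_marginal_mean M N)
  moreover obtain i t where "cdf_comp M i t < cdf_comp N i t"
    using \<open>dist_dom M N\<close> by (auto simp: dist_dom_def fsd_strict_comp_def)
  then have "expval N $ i < expval M $ i"
    using expectation_less_if_cdf_le_less[OF marginals cdf_le]
    by (simp add: expval_nth_eq_marginal_mean cdf_marginal M N)
  ultimately show ?thesis
    unfolding pareto_dom_def by blast
qed

theorem lemma4p1:
  fixes Pi :: "'p set" and Z :: "'p \<Rightarrow> (real^'d) measure"
  assumes laws: "\<And>p. p \<in> Pi \<Longrightarrow> prob_space (Z p) \<and> sets (Z p) = sets borel"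
    and finite_exp: "\<And>p. p \<in> Pi \<Longrightarrow> integrable (Z p) (\<lambda>z. z)"
  shows "\<forall>p\<in>Pi. \<forall>p'\<in>Pi. dist_dom (Z p) (Z p') \<longrightarrow> pareto_dom (expval (Z p)) (expval (Z p'))"
  using laws finite_exp pareto_dom_expval_if_dist_dom by blast

end
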